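(* Let $n\ge 2$ be an integer. For $i=1,2$ let $X_{i1},\dots,X_{in}$ be a random sample from the density $\frac{1}{\sigma}e^{-(x-\mu_i)/\sigma}$, $x\ge\mu_i$, the two samples independent, $\underline{\theta}=(\mu_1,\mu_2,\sigma)\in\mathbb{R}^2\times(0,\infty)$. Let $X_i=\min_jX_{ij}$, $Z_1=\min\{X_1,X_2\}$, $\mu_S=\mu_1I(X_1\le X_2)+\mu_2I(X_2<X_1)$, $\mu=n(\max\{\mu_1,\mu_2\}-\min\{\mu_1,\mu_2\})/\sigma$, and $U_1=\frac{Z_1-\mu_S}{\sigma}$. Then for every $\underline{\theta}$, (i) $\mathbb{E}_{\underline{\theta}}(U_1)=\frac1n\left[1-\left(\frac{\mu+1}{2}\right)e^{-\mu}\right]$; (ii) $\mathbb{E}_{\underline{\theta}}(U_1^2)=\frac{1}{n^2}\left[2-\left(\frac{\mu^2+3\mu+3}{2}\right)e^{-\mu}\right]$.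
   Context: $I(A)$ is the indicator of $A$; $\mathbb{E}_{\underline{\theta}}$ is expectation under $\underline{\theta}$. *)

theory Defs
  imports "HOL-Probability.Probability"
begin

definition shifted_exp_density :: "real \<Rightarrow> real \<Rightarrow> real \<Rightarrow> real" where
  "shifted_exp_density mu s x = (if x \<ge> mu then exp (-(x - mu) / s) / s else 0)"

definition sample_min :: "(nat \<Rightarrow> nat \<Rightarrow> 'a \<Rightarrow> real) \<Rightarrow> nat \<Rightarrow> nat \<Rightarrow> 'a \<Rightarrow> real" where
  "sample_min X n i \<omega> = Min ((\<lambda>j. X i j \<omega>) ` {1..n})"

end

theory Submission
  imports Defs "HOL-Real_Asymp.Real_Asymp"
begin

text \<open>Standardising, the variables \<open>(X\<^sub>i\<^sub>j - \<mu>\<^sub>i) / \<sigma>\<close> are independent standard exponentials,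
  so \<open>V\<^sub>i = n (X\<^sub>i - \<mu>\<^sub>i) / \<sigma>\<close> are independent standard exponentials as well (a minimum of
  \<open>n\<close> independent rate-1 exponentials has rate \<open>n\<close>). Since \<open>X\<^sub>1 \<le> X\<^sub>2\<close> iff
  \<open>V\<^sub>1 \<le> V\<^sub>2 + m\<close> with \<open>m = n (\<mu>\<^sub>2 - \<mu>\<^sub>1) / \<sigma>\<close>, we get \<open>n U\<^sub>1 = V\<^sub>1\<close> on that event and
  \<open>n U\<^sub>1 = V\<^sub>2\<close> otherwise. Its moments are double integrals against \<open>e\<^sup>-\<^sup>x\<^sup>-\<^sup>y\<close>: integrating
  out \<open>V\<^sub>2\<close> gives an incomplete gamma integral plus an exponential tail, and the remaining
  integral over \<open>V\<^sub>1\<close> is evaluated with explicit antiderivatives. The answer depends on \<open>m\<close>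
  only through \<open>|m| = \<mu>\<close>.\<close>

definition race_min :: "real \<Rightarrow> real \<Rightarrow> real \<Rightarrow> real" where
  "race_min m x y = (if x \<le> y + m then x else y)"

text \<open>For \<open>x \<ge> 0\<close> and \<open>W\<close> standard exponential, this is \<open>E[race_min m x W ^ k]\<close>:
  the event \<open>W < x - m\<close> contributes \<open>\<integral>\<^sub>0\<^sup>x\<^sup>-\<^sup>m w\<^sup>k e\<^sup>-\<^sup>w dw\<close>, the complement \<open>x\<^sup>k P(W \<ge> x - m)\<close>.\<close>
definition race_min_cond_moment :: "nat \<Rightarrow> real \<Rightarrow> real \<Rightarrow> real" where
  "race_min_cond_moment k m x = fact k * erlang_CDF k 1 (x - m) + x ^ k * exp (- max 0 (x - m))"

lemma borel_measurable_race_min[measurable]: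
  fixes f g :: "'a \<Rightarrow> real"
  assumes [measurable]: "f \<in> borel_measurable M" "g \<in> borel_measurable M"
  shows "(\<lambda>x. race_min m (f x) (g x)) \<in> borel_measurable M"
  unfolding race_min_def by measurable

lemma race_min_cond_moment_nonneg: "0 \<le> x \<Longrightarrow> 0 \<le> race_min_cond_moment k m x"
  by (simp add: race_min_cond_moment_def)

lemma erlang_CDF_max_0: "erlang_CDF k l (max 0 x) = erlang_CDF k l x"
  by (simp add: max_def erlang_CDF_at0) (simp add: erlang_CDF_def)

lemma nn_integral_power_times_exp_Ico:
  "(\<integral>\<^sup>+x. ennreal (x ^ k * exp (- x)) * indicator {0..<a} x \<partial>lborel) = ennreal (fact k * erlang_CDF k 1 a)"
proof (cases "0 \<le> a")
  case True
  have "(\<integral>\<^sup>+x. ennreal (x ^ k * exp (- x)) * indicator {0..<a} x \<partial>lborel)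
      = (\<integral>\<^sup>+x. ennreal (x ^ k * exp (- x)) * indicator {0..a} x \<partial>lborel)"
    by (rule nn_integral_cong_AE) (use AE_lborel_singleton[of a] in \<open>auto split: split_indicator\<close>)
  also have "\<dots> = ennreal (fact k * erlang_CDF k 1 a)"
    using nn_intergal_power_times_exp_Icc[OF True, of k] True by (simp add: erlang_CDF_def mult.commute)
  finally show ?thesis .
qed (simp add: erlang_CDF_def)

lemma DERIV_nonneg_tendsto_0_imp_nonpos:
  fixes F f :: "real \<Rightarrow> real"
  assumes "\<And>x. a \<le> x \<Longrightarrow> (F has_real_derivative f x) (at x)" and "\<And>x. a \<le> x \<Longrightarrow> 0 \<le> f x"
    and "(F \<longlongrightarrow> 0) at_top"
  shows "F a \<le> 0"
proof (rule tendsto_lowerbound[OF assms(3)])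
  show "\<forall>\<^sub>F x in at_top. F a \<le> F x"
    using eventually_ge_at_top[of a] by eventually_elim (rule deriv_nonneg_imp_mono[OF assms(1,2)], auto)
qed simp

lemma nn_integral_exponential_density_race_min_power:
  assumes "0 \<le> x"
  shows "(\<integral>\<^sup>+y. ennreal (exponential_density 1 y * race_min m x y ^ k) \<partial>lborel)
    = ennreal (race_min_cond_moment k m x)"
proof -
  define t where "t = max 0 (x - m)"
  have split: "ennreal (exponential_density 1 y * race_min m x y ^ k) =
      ennreal (y ^ k * exp (- y)) * indicator {0..<t} y + ennreal (x ^ k * exp (- y)) * indicator {t..} y" for y
    by (auto simp: t_def exponential_density_def race_min_def mult.commute split: split_indicator)
  have "(\<integral>\<^sup>+y. ennreal (exponential_density 1 y * race_min m x y ^ k) \<partial>lborel)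
      = (\<integral>\<^sup>+y. ennreal (y ^ k * exp (- y)) * indicator {0..<t} y \<partial>lborel)
        + (\<integral>\<^sup>+y. ennreal (x ^ k * exp (- y)) * indicator {t..} y \<partial>lborel)"
    unfolding split by (rule nn_integral_add) auto
  also have "(\<integral>\<^sup>+y. ennreal (x ^ k * exp (- y)) * indicator {t..} y \<partial>lborel) = ennreal (0 - - (x ^ k * exp (- t)))"
    by (rule nn_integral_FTC_atLeast) (use assms in \<open>auto intro!: derivative_eq_intros, real_asymp\<close>)
  finally show ?thesis
    using assms by (simp add: nn_integral_power_times_exp_Ico t_def erlang_CDF_max_0 race_min_cond_moment_def)
qed

lemma nn_integral_race_min_cond_moment:
  fixes F :: "real \<Rightarrow> real"
  assumes deriv: "\<And>x. max 0 m \<le> x \<Longrightarrow> (F has_real_derivative exp (- x) * race_min_cond_moment k m x) (at x)"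
    and lim: "(F \<longlongrightarrow> 0) at_top"
  shows "(\<integral>\<^sup>+x. ennreal (exponential_density 1 x * race_min_cond_moment k m x) \<partial>lborel)
    = ennreal (fact k * erlang_CDF k 1 m - F (max 0 m))"
proof -
  define a where "a = max 0 m"
  define f where "f x = exp (- x) * race_min_cond_moment k m x" for x
  have f_deriv: "(F has_real_derivative f x) (at x)" if "a \<le> x" for x
    using deriv that by (simp add: a_def f_def)
  have f_nonneg: "0 \<le> f x" if "a \<le> x" for x
    using that by (simp add: f_def a_def race_min_cond_moment_nonneg)
  have split: "ennreal (exponential_density 1 x * race_min_cond_moment k m x) =
      ennreal (x ^ k * exp (- x)) * indicator {0..<a} x + ennreal (f x) * indicator {a..} x" for x
    by (auto simp: a_def f_def exponential_density_def race_min_cond_moment_def erlang_CDF_def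
        split: split_indicator)
  have "(\<integral>\<^sup>+x. ennreal (exponential_density 1 x * race_min_cond_moment k m x) \<partial>lborel)
      = (\<integral>\<^sup>+x. ennreal (x ^ k * exp (- x)) * indicator {0..<a} x \<partial>lborel)
        + (\<integral>\<^sup>+x. ennreal (f x) * indicator {a..} x \<partial>lborel)"
    unfolding split by (rule nn_integral_add) (auto simp: f_def race_min_cond_moment_def erlang_CDF_def)
  also have "(\<integral>\<^sup>+x. ennreal (f x) * indicator {a..} x \<partial>lborel) = ennreal (0 - F a)"
    by (rule nn_integral_FTC_atLeast[OF _ f_deriv f_nonneg lim])
       (auto simp: a_def f_def race_min_cond_moment_def erlang_CDF_def)
  finally show ?thesis
    using DERIV_nonneg_tendsto_0_imp_nonpos[of a F f, OF f_deriv f_nonneg lim]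
    by (simp add: nn_integral_power_times_exp_Ico a_def f_def erlang_CDF_max_0 flip: ennreal_plus)
qed

lemma integral_race_min_power:
  fixes F :: "real \<Rightarrow> real"
  assumes deriv: "\<And>x. max 0 m \<le> x \<Longrightarrow> (F has_real_derivative exp (- x) * race_min_cond_moment k m x) (at x)"
    and lim: "(F \<longlongrightarrow> 0) at_top"
  shows "(\<integral>p. exponential_density 1 (fst p) * exponential_density 1 (snd p) * race_min m (fst p) (snd p) ^ k
      \<partial>(lborel \<Otimes>\<^sub>M lborel)) = fact k * erlang_CDF k 1 m - F (max 0 m)"
proof -
  let ?h = "\<lambda>x y. exponential_density 1 x * exponential_density 1 y * race_min m x y ^ k"
  have h_nonneg: "0 \<le> ?h x y" for x y
    by (auto simp: exponential_density_def race_min_def)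
  have inner: "(\<integral>\<^sup>+y. ennreal (?h x y) \<partial>lborel) = ennreal (exponential_density 1 x * race_min_cond_moment k m x)" for x
  proof (cases "0 \<le> x")
    case True
    have "(\<integral>\<^sup>+y. ennreal (?h x y) \<partial>lborel)
        = (\<integral>\<^sup>+y. ennreal (exponential_density 1 x) * ennreal (exponential_density 1 y * race_min m x y ^ k) \<partial>lborel)"
      by (rule nn_integral_cong) (simp add: ennreal_mult' exponential_density_nonneg mult.assoc)
    also have "\<dots> = ennreal (exponential_density 1 x) * ennreal (race_min_cond_moment k m x)"
      by (subst nn_integral_cmult) (auto simp: nn_integral_exponential_density_race_min_power[OF True])
    finally show ?thesis by (simp add: ennreal_mult' exponential_density_nonneg)
  qed (simp add: exponential_density_def)
  have "(\<integral>\<^sup>+p. ennreal (?h (fst p) (snd p)) \<partial>(lborel \<Otimes>\<^sub>M lborel))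
      = (\<integral>\<^sup>+x. \<integral>\<^sup>+y. ennreal (?h x y) \<partial>lborel \<partial>lborel)"
    by (subst lborel.nn_integral_fst[symmetric]) auto
  also have "\<dots> = ennreal (fact k * erlang_CDF k 1 m - F (max 0 m))"
    unfolding inner by (rule nn_integral_race_min_cond_moment[OF deriv lim])
  finally have nn: "(\<integral>\<^sup>+p. ennreal (?h (fst p) (snd p)) \<partial>(lborel \<Otimes>\<^sub>M lborel))
      = ennreal (fact k * erlang_CDF k 1 m - F (max 0 m))" .
  have "F (max 0 m) \<le> 0"
    by (rule DERIV_nonneg_tendsto_0_imp_nonpos[OF deriv _ lim])
       (auto intro!: mult_nonneg_nonneg race_min_cond_moment_nonneg)
  then have "0 \<le> fact k * erlang_CDF k 1 m - F (max 0 m)"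
    using mult_nonneg_nonneg[OF fact_ge_zero[of k] erlang_CDF_nonneg[OF zero_less_one, of k m]] by linarith
  then show ?thesis
    by (subst integral_eq_nn_integral) (auto simp: nn h_nonneg)
qed

lemma integral_race_min:
  "(\<integral>p. exponential_density 1 (fst p) * exponential_density 1 (snd p) * race_min m (fst p) (snd p)
      \<partial>(lborel \<Otimes>\<^sub>M lborel)) = 1 - (\<bar>m\<bar> + 1) / 2 * exp (- \<bar>m\<bar>)"
proof -
  define F where "F x = - exp (- x) - (m - 1) / 2 * exp (m - 2 * x)" for x
  have "(F has_real_derivative exp (- x) * race_min_cond_moment 1 m x) (at x)" if "max 0 m \<le> x" for x
  proof -
    have "(F has_real_derivative exp (- x) + (m - 1) * exp (m - 2 * x)) (at x)"
      unfolding F_def by (auto intro!: derivative_eq_intros simp: field_simps)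
    also have "exp (- x) + (m - 1) * exp (m - 2 * x) = exp (- x) + (m - 1) * (exp (- x) * exp (m - x))"
      by (simp flip: exp_add)
    also have "\<dots> = exp (- x) * race_min_cond_moment 1 m x"
      using that by (simp add: race_min_cond_moment_def erlang_CDF_def algebra_simps)
    finally show ?thesis .
  qed
  moreover have "(F \<longlongrightarrow> 0) at_top"
    unfolding F_def by real_asymp
  ultimately have "(\<integral>p. exponential_density 1 (fst p) * exponential_density 1 (snd p) *
      race_min m (fst p) (snd p) ^ 1 \<partial>(lborel \<Otimes>\<^sub>M lborel)) = fact 1 * erlang_CDF 1 1 m - F (max 0 m)"
    by (rule integral_race_min_power)
  also have "\<dots> = 1 - (\<bar>m\<bar> + 1) / 2 * exp (- \<bar>m\<bar>)"
    by (cases "0 \<le> m") (simp_all add: F_def erlang_CDF_def field_simps)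
  finally show ?thesis by simp
qed

lemma integral_race_min_squared:
  "(\<integral>p. exponential_density 1 (fst p) * exponential_density 1 (snd p) * (race_min m (fst p) (snd p))\<^sup>2
      \<partial>(lborel \<Otimes>\<^sub>M lborel)) = 2 - (\<bar>m\<bar>\<^sup>2 + 3 * \<bar>m\<bar> + 3) / 2 * exp (- \<bar>m\<bar>)"
proof -
  define F where "F x = - 2 * exp (- x) - ((m - 1) * x + (m - m\<^sup>2 / 2 - 1) + (m - 1) / 2) * exp (m - 2 * x)" for x
  have "(F has_real_derivative exp (- x) * race_min_cond_moment 2 m x) (at x)" if "max 0 m \<le> x" for x
  proof -
    have "(F has_real_derivative 2 * exp (- x) + ((2 * m - 2) * x + (2 * m - m\<^sup>2 - 2)) * exp (m - 2 * x)) (at x)"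
      unfolding F_def by (auto intro!: derivative_eq_intros simp: field_simps power2_eq_square)
    also have "2 * exp (- x) + ((2 * m - 2) * x + (2 * m - m\<^sup>2 - 2)) * exp (m - 2 * x)
        = 2 * exp (- x) + ((2 * m - 2) * x + (2 * m - m\<^sup>2 - 2)) * (exp (- x) * exp (m - x))"
      by (simp flip: exp_add)
    also have "\<dots> = exp (- x) * race_min_cond_moment 2 m x"
      using that by (simp add: race_min_cond_moment_def erlang_CDF_def numeral_eq_Suc field_simps
          power2_eq_square)
    finally show ?thesis .
  qed
  moreover have "(F \<longlongrightarrow> 0) at_top"
    unfolding F_def by real_asymp
  ultimately have "(\<integral>p. exponential_density 1 (fst p) * exponential_density 1 (snd p) *
      (race_min m (fst p) (snd p))\<^sup>2 \<partial>(lborel \<Otimes>\<^sub>M lborel)) = fact 2 * erlang_CDF 2 1 m - F (max 0 m)"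
    by (rule integral_race_min_power)
  also have "\<dots> = 2 - (\<bar>m\<bar>\<^sup>2 + 3 * \<bar>m\<bar> + 3) / 2 * exp (- \<bar>m\<bar>)"
    by (cases "0 \<le> m") (simp_all add: F_def erlang_CDF_def numeral_eq_Suc field_simps power2_eq_square)
  finally show ?thesis .
qed

lemma race_min_standardized:
  fixes a b \<mu>1 \<mu>2 \<sigma> c :: real
  assumes "0 < \<sigma>" and "0 < c"
  shows "(min a b - (if a \<le> b then \<mu>1 else \<mu>2)) / \<sigma>
    = race_min (c * (\<mu>2 - \<mu>1) / \<sigma>) (c * ((a - \<mu>1) / \<sigma>)) (c * ((b - \<mu>2) / \<sigma>)) / c"
proof -
  have "c * ((a - \<mu>1) / \<sigma>) \<le> c * ((b - \<mu>2) / \<sigma>) + c * (\<mu>2 - \<mu>1) / \<sigma> \<longleftrightarrow> a \<le> b"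
    using assms by (simp add: field_simps)
  then show ?thesis
    using assms by (auto simp: race_min_def min_def)
qed

lemma (in prob_space) standardized_shifted_exp_distributed:
  assumes D: "distributed M lborel Z (\<lambda>x. ennreal (shifted_exp_density mu s x))" and s: "0 < s"
  shows "distributed M lborel (\<lambda>\<omega>. (Z \<omega> - mu) / s) (\<lambda>x. ennreal (exponential_density 1 x))"
proof (subst exponential_distributed_iff, safe)
  have [measurable]: "Z \<in> borel_measurable M"
    using distributed_measurable[OF D] by simp
  show "(\<lambda>\<omega>. (Z \<omega> - mu) / s) \<in> borel_measurable M"
    by measurable
  fix a :: real
  assume a: "0 \<le> a"
  have "{\<omega> \<in> space M. (Z \<omega> - mu) / s \<le> a} = Z -` {..mu + s * a} \<inter> space M"
    using s by (auto simp: field_simps)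
  then have "emeasure M {\<omega> \<in> space M. (Z \<omega> - mu) / s \<le> a}
      = (\<integral>\<^sup>+x. ennreal (shifted_exp_density mu s x) * indicator {..mu + s * a} x \<partial>lborel)"
    using distributed_emeasure[OF D] by simp
  also have "\<dots> = (\<integral>\<^sup>+x. ennreal (exp (- (x - mu) / s) / s) * indicator {mu..mu + s * a} x \<partial>lborel)"
    by (rule nn_integral_cong) (auto simp: shifted_exp_density_def split: split_indicator)
  also have "\<dots> = ennreal (- exp (- ((mu + s * a) - mu) / s) - - exp (- (mu - mu) / s))"
    by (rule nn_integral_FTC_Icc) (use s a in \<open>auto intro!: derivative_eq_intros simp: field_simps\<close>)
  finally show "prob {\<omega> \<in> space M. (Z \<omega> - mu) / s \<le> a} = 1 - exp (- a * 1)"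
    using s a by (simp add: emeasure_eq_measure)
qed simp

lemma (in prob_space) scaled_Min_shifted_exp_distributed:
  assumes "finite J" and "J \<noteq> {}" and "0 < s"
    and indep: "indep_vars (\<lambda>_. borel) Z J"
    and distr: "\<And>j. j \<in> J \<Longrightarrow> distributed M lborel (Z j) (\<lambda>x. ennreal (shifted_exp_density mu s x))"
  shows "distributed M lborel (\<lambda>\<omega>. real (card J) * ((Min ((\<lambda>j. Z j \<omega>) ` J) - mu) / s))
    (\<lambda>x. ennreal (exponential_density 1 x))"
proof -
  define Y where "Y j \<omega> = (Z j \<omega> - mu) / s" for j \<omega>
  have "distributed M lborel (\<lambda>\<omega>. Min ((\<lambda>j. Y j \<omega>) ` J)) (\<lambda>x. ennreal (exponential_density (\<Sum>j\<in>J. 1) x))"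
  proof (rule exponential_distributed_Min)
    show "indep_vars (\<lambda>_. borel) Y J"
      using indep_vars_compose2[OF indep, of "\<lambda>_ x. (x - mu) / s" "\<lambda>_. borel"] by (simp add: Y_def[abs_def])
    show "distributed M lborel (Y j) (\<lambda>x. ennreal (exponential_density 1 x))" if "j \<in> J" for j
      using standardized_shifted_exp_distributed[OF distr[OF that] \<open>0 < s\<close>] by (simp add: Y_def[abs_def])
  qed (use assms in auto)
  then have "distributed M lborel (\<lambda>\<omega>. real (card J) * Min ((\<lambda>j. Y j \<omega>) ` J))
      (\<lambda>x. ennreal (exponential_density (real (card J) / real (card J)) x))"
    using assms by (intro erlang_distributed_mult_const) (auto simp: card_gt_0_iff)
  moreover have "Min ((\<lambda>j. Y j \<omega>) ` J) = (Min ((\<lambda>j. Z j \<omega>) ` J) - mu) / s" for \<omega>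
  proof -
    have "mono (\<lambda>v. (v - mu) / s)"
      using \<open>0 < s\<close> by (auto simp: mono_def divide_right_mono)
    from mono_Min_commute[OF this, of "(\<lambda>j. Z j \<omega>) ` J"] show ?thesis
      using assms by (simp add: Y_def image_image)
  qed
  ultimately show ?thesis
    using assms by (simp add: card_gt_0_iff)
qed

lemma (in prob_space) indep_var_Min_blocks:
  fixes Z :: "'i \<Rightarrow> 'a \<Rightarrow> real" and f g :: "real \<Rightarrow> real"
  assumes indep: "indep_vars (\<lambda>_. borel) Z I"
    and "A \<inter> B = {}" and "A \<subseteq> I" and "B \<subseteq> I" and "finite A" and "finite B"
    and f: "f \<in> borel_measurable borel" and g: "g \<in> borel_measurable borel"
  shows "indep_var lborel (\<lambda>\<omega>. f (Min ((\<lambda>i. Z i \<omega>) ` A))) lborel (\<lambda>\<omega>. g (Min ((\<lambda>i. Z i \<omega>) ` B)))"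
proof -
  have Min_measurable: "(\<lambda>z :: 'i \<Rightarrow> real. Min (z ` C)) \<in> borel_measurable (PiM C (\<lambda>_. borel))"
    if "finite C" for C
    using borel_measurable_Min[OF that, of "\<lambda>i z. z i" "PiM C (\<lambda>_. borel)"] by simp
  have "(\<lambda>z. f (Min ((\<lambda>i. z i) ` A))) \<in> PiM A (\<lambda>_. borel) \<rightarrow>\<^sub>M lborel"
    and "(\<lambda>z. g (Min ((\<lambda>i. z i) ` B))) \<in> PiM B (\<lambda>_. borel) \<rightarrow>\<^sub>M lborel"
    using measurable_compose[OF Min_measurable[OF \<open>finite A\<close>] f]
      measurable_compose[OF Min_measurable[OF \<open>finite B\<close>] g]
    by simp_all
  from indep_var_compose[OF indep_var_restrict[OF indep assms(2-4)] this] show ?thesis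
    by (simp add: comp_def cong: image_cong)
qed

lemma (in prob_space) expectation_race_min_power:
  assumes "distributed M lborel V1 (\<lambda>x. ennreal (exponential_density 1 x))"
    and "distributed M lborel V2 (\<lambda>x. ennreal (exponential_density 1 x))"
    and "indep_var lborel V1 lborel V2"
  shows "expectation (\<lambda>\<omega>. race_min m (V1 \<omega>) (V2 \<omega>) ^ k)
    = (\<integral>p. exponential_density 1 (fst p) * exponential_density 1 (snd p) * race_min m (fst p) (snd p) ^ k
        \<partial>(lborel \<Otimes>\<^sub>M lborel))"
proof -
  have "distributed M (lborel \<Otimes>\<^sub>M lborel) (\<lambda>\<omega>. (V1 \<omega>, V2 \<omega>))
      (\<lambda>(x, y). ennreal (exponential_density 1 x) * ennreal (exponential_density 1 y))"
    using assms by (rule distributed_joint_indep[OF sigma_finite_lborel sigma_finite_lborel])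
  also have "(\<lambda>(x, y). ennreal (exponential_density 1 x) * ennreal (exponential_density 1 y))
      = (\<lambda>p. ennreal (exponential_density 1 (fst p) * exponential_density 1 (snd p)))"
    by (auto simp: ennreal_mult exponential_density_nonneg)
  finally show ?thesis
    by (subst distributed_integral) (auto simp: exponential_density_nonneg)
qed

lemma sample_min_eq_Min_Times:
  "sample_min X n i \<omega> = Min ((\<lambda>p. (\<lambda>(i, j). X i j) p \<omega>) ` ({i} \<times> {1..n}))"
  unfolding sample_min_def by (rule arg_cong[where f = Min]) (auto intro: rev_image_eqI)

lemma (in prob_space) scaled_sample_min_distributed:
  assumes "0 < n" and "0 < \<sigma>"
    and "indep_vars (\<lambda>_. borel) (\<lambda>(i, j). X i j) I" and "{i} \<times> {1..n} \<subseteq> I"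
    and "\<forall>j\<in>{1..n}. distributed M lborel (X i j) (\<lambda>x. ennreal (shifted_exp_density \<mu> \<sigma> x))"
  shows "distributed M lborel (\<lambda>\<omega>. real n * ((sample_min X n i \<omega> - \<mu>) / \<sigma>))
    (\<lambda>x. ennreal (exponential_density 1 x))"
proof -
  have "distributed M lborel (\<lambda>\<omega>. real (card ({i} \<times> {1..n})) *
      ((Min ((\<lambda>p. (\<lambda>(i, j). X i j) p \<omega>) ` ({i} \<times> {1..n})) - \<mu>) / \<sigma>))
      (\<lambda>x. ennreal (exponential_density 1 x))"
    using assms by (intro scaled_Min_shifted_exp_distributed indep_vars_subset[OF assms(3)]) auto
  then show ?thesis
    by (simp add: sample_min_eq_Min_Times)
qed

lemma (in prob_space) indep_var_sample_min:
  fixes f g :: "real \<Rightarrow> real"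
  assumes "indep_vars (\<lambda>_. borel) (\<lambda>(i, j). X i j) I" and "{i, i'} \<times> {1..n} \<subseteq> I" and "i \<noteq> i'"
    and "f \<in> borel_measurable borel" and "g \<in> borel_measurable borel"
  shows "indep_var lborel (\<lambda>\<omega>. f (sample_min X n i \<omega>)) lborel (\<lambda>\<omega>. g (sample_min X n i' \<omega>))"
  unfolding sample_min_eq_Min_Times by (rule indep_var_Min_blocks) (use assms in auto)

theorem lemma5p1:
  fixes M :: "'a measure" and X :: "nat \<Rightarrow> nat \<Rightarrow> 'a \<Rightarrow> real"
    and n :: nat and \<mu>1 \<mu>2 \<sigma> :: real
  assumes "prob_space M"
    and "n \<ge> 2"
    and "\<sigma> > 0"
    and "prob_space.indep_vars M (\<lambda>_. borel) (\<lambda>(i, j). X i j) ({1, 2} \<times> {1..n})"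
    and "\<forall>j\<in>{1..n}. distributed M lborel (X 1 j) (\<lambda>x. ennreal (shifted_exp_density \<mu>1 \<sigma> x))"
    and "\<forall>j\<in>{1..n}. distributed M lborel (X 2 j) (\<lambda>x. ennreal (shifted_exp_density \<mu>2 \<sigma> x))"
  defines "U1 \<equiv> (\<lambda>\<omega>. (min (sample_min X n 1 \<omega>) (sample_min X n 2 \<omega>)
                 - (if sample_min X n 1 \<omega> \<le> sample_min X n 2 \<omega> then \<mu>1 else \<mu>2)) / \<sigma>)"
    and "\<mu> \<equiv> real n * (max \<mu>1 \<mu>2 - min \<mu>1 \<mu>2) / \<sigma>"
  shows "(\<integral>\<omega>. U1 \<omega> \<partial>M) = (1 / real n) * (1 - ((\<mu> + 1) / 2) * exp (-\<mu>)) \<and>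
         (\<integral>\<omega>. (U1 \<omega>)\<^sup>2 \<partial>M) = (1 / (real n)\<^sup>2) * (2 - ((\<mu>\<^sup>2 + 3 * \<mu> + 3) / 2) * exp (-\<mu>))"
proof -
  interpret prob_space M by (rule assms(1))
  define V1 where "V1 \<omega> = real n * ((sample_min X n 1 \<omega> - \<mu>1) / \<sigma>)" for \<omega>
  define V2 where "V2 \<omega> = real n * ((sample_min X n 2 \<omega> - \<mu>2) / \<sigma>)" for \<omega>
  define m where "m = real n * (\<mu>2 - \<mu>1) / \<sigma>"
  have "distributed M lborel V1 (\<lambda>x. ennreal (exponential_density 1 x))"
    unfolding V1_def by (rule scaled_sample_min_distributed[OF _ assms(3,4)]) (use assms(2,5) in auto)
  moreover have "distributed M lborel V2 (\<lambda>x. ennreal (exponential_density 1 x))"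
    unfolding V2_def by (rule scaled_sample_min_distributed[OF _ assms(3,4)]) (use assms(2,6) in auto)
  moreover have "indep_var lborel V1 lborel V2"
    unfolding V1_def V2_def using assms(4) by (intro indep_var_sample_min) auto
  ultimately have E: "expectation (\<lambda>\<omega>. race_min m (V1 \<omega>) (V2 \<omega>) ^ k)
      = (\<integral>p. exponential_density 1 (fst p) * exponential_density 1 (snd p) * race_min m (fst p) (snd p) ^ k
          \<partial>(lborel \<Otimes>\<^sub>M lborel))" for k
    by (rule expectation_race_min_power)
  have U1_eq: "U1 \<omega> = race_min m (V1 \<omega>) (V2 \<omega>) / real n" for \<omega>
    using race_min_standardized[OF assms(3), of "real n"] assms(2) by (simp add: U1_def V1_def V2_def m_def)
  have "\<mu> = \<bar>m\<bar>"
    using assms(3) by (auto simp: assms(8) m_def abs_mult max_def min_def)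
  then show ?thesis
    using E[of 1] E[of 2] integral_race_min[of m] integral_race_min_squared[of m]
    by (simp add: U1_eq power_divide)
qed

end
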